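(* Assume (A) or (B), with $\alpha=a$ in case (A) and $\alpha=b$ in case (B). Let $1<q\le\infty$ and $q\le r\le\infty$. There is a constant $c_2>0$ depending only on $q,n,\alpha$, bounded for $q\in(1+\varepsilon,\infty]$ for each fixed $\varepsilon>0$, such that for every $\varphi\in L^{q,\infty}(w)$ and $t>0$, $$\|S(t)\varphi w\|_{L^{r,\infty}(w)}\le c_2\,t^{-\frac{n+\alpha}{2}\left(\frac1q-\frac1r\right)}\|\varphi\|_{L^{q,\infty}(w)}.$$
   Context: (A): $w(x)=|x_1|^a$ on $\mathbb{R}^n$ with $a\in[0,1)$; (B): $w(x)=|x|^b$ with $b\in[0,n)$. $\Gamma$ is the fundamental solution of $\partial_t v-w^{-1}\operatorname{div}(w\nabla v)=0$ with pole at $(y,0)$, assumed to satisfy (K1) $\int\Gamma(x,y,t)w(x)dx=\int\Gamma(x,y,t)w(y)dy=1$; (K2) $\Gamma(x,y,t)=\int\Gamma(x,\xi,t-s)\Gamma(\xi,y,s)w(\xi)d\xi$ for $t>s>0$; (K3) $c_*e^{-|x-y|^2/(c_*t)}\le \sqrt{w(B(x,\sqrt t))w(B(y,\sqrt t))}\,\Gamma(x,y,t)\le C_*e^{-|x-y|^2/(C_*t)}$, $w(E)=\int_Ew$. $[S(t)\varphi w](x):=\int\Gamma(x,y,t)\varphi(y)w(y)\,dy$. $\mu_f(\lambda)=w(\{|f|>\lambda\})$, $f^*(s)=\inf\{\lambda>0:\mu_f(\lambda)\le s\}$, $\|f\|_{L^{r,\infty}(w)}=\sup_{s>0}s^{1/r}f^*(s)$,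 $L^{\infty,\infty}(w)=L^\infty$. *)

theory Defs
  imports "HOL-Analysis.Analysis"
begin

text \<open>Real power with the convention 0 to the power 0 equal to 1 (Isabelle's powr gives 0 there).\<close>
definition rpow :: "real \<Rightarrow> real \<Rightarrow> real" where
  "rpow x p = (if x = 0 then (if p = 0 then 1 else 0) else x powr p)"

text \<open>Weight (A): w(x) = |x_i|^a (coordinate i plays the role of x_1).\<close>
definition wA :: "'n::finite \<Rightarrow> real \<Rightarrow> real^'n \<Rightarrow> real" where
  "wA i a x = rpow \<bar>x $ i\<bar> a"

definition wB :: "real \<Rightarrow> real^'n::finite \<Rightarrow> real" where
  "wB b x = rpow (norm x) b"

definition wmeasure :: "(real^'n::finite \<Rightarrow> real) \<Rightarrow> (real^'n) measure" where
  "wmeasure w = density lborel (\<lambda>x. ennreal (w x))"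

definition wvol :: "(real^'n::finite \<Rightarrow> real) \<Rightarrow> (real^'n) set \<Rightarrow> real" where
  "wvol w E = measure (wmeasure w) E"

definition distf :: "(real^'n::finite \<Rightarrow> real) \<Rightarrow> (real^'n \<Rightarrow> real) \<Rightarrow> real \<Rightarrow> ennreal" where
  "distf w f lam = emeasure (wmeasure w) {x. lam < \<bar>f x\<bar>}"

text \<open>Decreasing rearrangement f^*(s) = inf {lambda > 0. mu_f(lambda) <= s} (inf of empty set = infinity).\<close>
definition rearr :: "(real^'n::finite \<Rightarrow> real) \<Rightarrow> (real^'n \<Rightarrow> real) \<Rightarrow> real \<Rightarrow> ennreal" where
  "rearr w f s = (INF lam\<in>{lam::real. 0 < lam \<and> distf w f lam \<le> ennreal s}. ennreal lam)"

definition einv :: "ereal \<Rightarrow> real" where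
  "einv r = (if r = \<infinity> then 0 else 1 / real_of_ereal r)"

text \<open>Weak Lorentz quasi-norm ||f||_{L^{r,infinity}(w)} = sup_{s>0} s^{1/r} f^*(s).
  For r = infinity this is sup_{s>0} f^*(s), the essential supremum of |f|.\<close>
definition wlnorm :: "(real^'n::finite \<Rightarrow> real) \<Rightarrow> ereal \<Rightarrow> (real^'n \<Rightarrow> real) \<Rightarrow> ennreal" where
  "wlnorm w r f = (SUP s\<in>{0<..}. ennreal (s powr einv r) * rearr w f s)"

definition Sop :: "(real^'n::finite \<Rightarrow> real) \<Rightarrow> (real^'n \<Rightarrow> real^'n \<Rightarrow> real \<Rightarrow> real)
    \<Rightarrow> real \<Rightarrow> (real^'n \<Rightarrow> real) \<Rightarrow> real^'n \<Rightarrow> real" where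
  "Sop w \<Gamma> t \<phi> x = (LINT y|lborel. \<Gamma> x y t * \<phi> y * w y)"

definition kernel_ok :: "(real^'n::finite \<Rightarrow> real) \<Rightarrow> real \<Rightarrow> real \<Rightarrow>
    (real^'n \<Rightarrow> real^'n \<Rightarrow> real \<Rightarrow> real) \<Rightarrow> bool" where
  "kernel_ok w cs Cs \<Gamma> \<longleftrightarrow>
     (\<forall>t>0. (\<lambda>(x,y). \<Gamma> x y t) \<in> borel_measurable borel) \<and>
     (\<forall>t>0. \<forall>y. (LINT x|lborel. \<Gamma> x y t * w x) = 1) \<and>
     (\<forall>t>0. \<forall>x. (LINT y|lborel. \<Gamma> x y t * w y) = 1) \<and>
     (\<forall>t s x y. 0 < s \<and> s < t \<longrightarrow>
        \<Gamma> x y t = (LINT \<xi>|lborel. \<Gamma> x \<xi> (t - s) * \<Gamma> \<xi> y s * w \<xi>)) \<and>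
     (\<forall>x y t. 0 < t \<longrightarrow>
        cs * exp (- (dist x y)\<^sup>2 / (cs * t))
          \<le> sqrt (wvol w (ball x (sqrt t)) * wvol w (ball y (sqrt t))) * \<Gamma> x y t \<and>
        sqrt (wvol w (ball x (sqrt t)) * wvol w (ball y (sqrt t))) * \<Gamma> x y t
          \<le> Cs * exp (- (dist x y)\<^sup>2 / (Cs * t)))"

end

theory Submission
  imports Defs
begin

(*
  The weights satisfy w(B(x,rho)) >= c0 rho^(n+alpha), so the upper Gaussian bound in (K3) gives
  0 <= Gamma(x,y,t) <= K := (C_*/c0) t^(-(n+alpha)/2). With (K1), S(t) is then a positive integral
  operator whose kernel is bounded by K and integrates to 1 against w in either variable.

  Fix a level l and split phi at height l/2. The small part changes |S(t) phi w| by at most l/2.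
  By a dyadic layer-cake estimate the large part has L^1(w)-norm at most D_q (l/2) (2M/l)^q, where
  M is the weak L^q norm of phi and D_q = 2/(1 - 2^(1-q)). Chebyshev's inequality for its image gives
  w{|S(t) phi w| > l} <= D_q (2M/l)^q, while the L^1 -> L^infinity bound K shows that this set is
  empty as soon as K D_q (2M/l)^q <= 1. Combining the two bounds yields the weak L^r estimate with
  constant 2 D_q^(1/q) K^(1/q - 1/r); since D_q decreases in q, it is uniform for q > 1 + epsilon.
*)

section \<open>Weights\<close>

lemma sets_wmeasure[simp, measurable_cong]: "sets (wmeasure w) = sets borel"
  by (simp add: wmeasure_def)

lemma emeasure_wmeasure:
  assumes "w \<in> borel_measurable borel" "A \<in> sets borel"
  shows "emeasure (wmeasure w) A = (\<integral>\<^sup>+ y. ennreal (w y) * indicator A y \<partial>lborel)"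
  unfolding wmeasure_def using assms by (subst emeasure_density) auto

lemma nn_integral_wmeasure:
  assumes "w \<in> borel_measurable borel" "f \<in> borel_measurable borel"
  shows "integral\<^sup>N (wmeasure w) f = (\<integral>\<^sup>+ x. ennreal (w x) * f x \<partial>lborel)"
  unfolding wmeasure_def using assms by (subst nn_integral_density) auto

lemma rpow_nonneg: "0 \<le> x \<Longrightarrow> 0 \<le> rpow x p"
  by (simp add: rpow_def)

lemma borel_measurable_rpow[measurable]: "(\<lambda>x. rpow x p) \<in> borel_measurable borel"
  unfolding rpow_def by measurable

lemma powr_le_rpow: "0 \<le> p \<Longrightarrow> 0 < u \<Longrightarrow> u \<le> x \<Longrightarrow> u powr p \<le> rpow x p"
  by (auto simp: rpow_def powr_mono2)

text \<open>The summand 1 accounts for the convention \<open>rpow 0 0 = 1\<close>.\<close>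

lemma rpow_le_one_plus_powr: "0 \<le> p \<Longrightarrow> 0 \<le> x \<Longrightarrow> x \<le> R \<Longrightarrow> rpow x p \<le> 1 + R powr p"
  by (auto simp: rpow_def intro: order.trans[OF powr_mono2[of p x R]])

text \<open>Both weights are \<open>g(x)\<^sup>\<alpha>\<close> with \<open>g\<close> the distance to a hyperplane or to a point.\<close>

locale lipschitz_gauge =
  fixes g :: "real^'n::finite \<Rightarrow> real"
  assumes nonneg: "\<And>y. 0 \<le> g y"
    and lipschitz: "\<And>y z. g z \<le> g y + dist y z"
    and measurable_gauge[measurable]: "g \<in> borel_measurable borel"
    and large_nearby: "\<And>x \<rho>. 0 < \<rho> \<Longrightarrow> \<exists>z. dist x z \<le> \<rho>/2 \<and> \<rho>/2 \<le> g z"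
begin

lemma emeasure_ball_finite:
  assumes "0 \<le> \<alpha>"
  shows "emeasure (wmeasure (\<lambda>y. rpow (g y) \<alpha>)) (ball x \<rho>) < \<infinity>"
proof -
  define R where "R = g x + \<rho>"
  have "emeasure (wmeasure (\<lambda>y. rpow (g y) \<alpha>)) (ball x \<rho>)
      = (\<integral>\<^sup>+ y. ennreal (rpow (g y) \<alpha>) * indicator (ball x \<rho>) y \<partial>lborel)"
    by (rule emeasure_wmeasure) auto
  also have "\<dots> \<le> (\<integral>\<^sup>+ y. ennreal (1 + R powr \<alpha>) * indicator (ball x \<rho>) y \<partial>lborel)"
  proof (rule nn_integral_mono)
    fix y
    show "ennreal (rpow (g y) \<alpha>) * indicator (ball x \<rho>) y \<le> ennreal (1 + R powr \<alpha>) * indicator (ball x \<rho>) y"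
    proof (cases "y \<in> ball x \<rho>")
      case True
      then have "rpow (g y) \<alpha> \<le> 1 + R powr \<alpha>"
        unfolding R_def using lipschitz[where y=x and z=y] assms nonneg[of y]
        by (intro rpow_le_one_plus_powr) (auto simp: dist_commute)
      then show ?thesis using True by (simp add: ennreal_leI del: ennreal_plus)
    qed auto
  qed
  also have "\<dots> = ennreal (1 + R powr \<alpha>) * emeasure lborel (ball x \<rho>)"
    by (subst nn_integral_cmult_indicator) auto
  also have "\<dots> < \<infinity>"
    using emeasure_lborel_ball_finite[of x \<rho>] by (simp add: ennreal_mult_less_top)
  finally show ?thesis .
qed

lemma wvol_ball_ge:
  assumes \<alpha>: "0 \<le> \<alpha>" and \<rho>: "0 < \<rho>"
  shows "(\<rho>/4) powr \<alpha> * measure lborel (ball (0::real^'n) (\<rho>/4)) \<le> wvol (\<lambda>y. rpow (g y) \<alpha>) (ball x \<rho>)"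
proof -
  obtain z where z: "dist x z \<le> \<rho>/2" "\<rho>/2 \<le> g z" using large_nearby[OF \<rho>] by blast
  have in_ball: "y \<in> ball x \<rho>" and large: "(\<rho>/4) powr \<alpha> \<le> rpow (g y) \<alpha>"
    if "y \<in> ball z (\<rho>/4)" for y
  proof -
    show "y \<in> ball x \<rho>" using that z(1) dist_triangle[of x y z] \<rho> by (simp add: dist_commute)
    show "(\<rho>/4) powr \<alpha> \<le> rpow (g y) \<alpha>"
      using lipschitz[where y=y and z=z] z(2) that \<alpha> \<rho> by (intro powr_le_rpow) (auto simp: dist_commute)
  qed
  have "ennreal ((\<rho>/4) powr \<alpha>) * emeasure lborel (ball z (\<rho>/4))
      = (\<integral>\<^sup>+ y. ennreal ((\<rho>/4) powr \<alpha>) * indicator (ball z (\<rho>/4)) y \<partial>lborel)"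
    by (subst nn_integral_cmult_indicator) auto
  also have "\<dots> \<le> (\<integral>\<^sup>+ y. ennreal (rpow (g y) \<alpha>) * indicator (ball x \<rho>) y \<partial>lborel)"
    using in_ball large by (intro nn_integral_mono) (auto intro: ennreal_leI simp: indicator_def)
  also have "\<dots> = emeasure (wmeasure (\<lambda>y. rpow (g y) \<alpha>)) (ball x \<rho>)"
    by (rule emeasure_wmeasure[symmetric]) auto
  also have "\<dots> = ennreal (wvol (\<lambda>y. rpow (g y) \<alpha>) (ball x \<rho>))"
    unfolding wvol_def using emeasure_ball_finite[OF \<alpha>, of x \<rho>] by (intro emeasure_eq_ennreal_measure) auto
  finally have "ennreal ((\<rho>/4) powr \<alpha> * measure lborel (ball z (\<rho>/4))) \<le> ennreal (wvol (\<lambda>y. rpow (g y) \<alpha>) (ball x \<rho>))"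
    using emeasure_lborel_ball_finite[of z "\<rho>/4"] by (simp add: ennreal_mult emeasure_eq_ennreal_measure)
  moreover have "measure lborel (ball z (\<rho>/4)) = measure lborel (ball (0::real^'n) (\<rho>/4))"
    using \<rho> content_ball_conv_unit_ball[of "\<rho>/4" z] content_ball_conv_unit_ball[of "\<rho>/4" "0::real^'n"]
    by simp
  ultimately show ?thesis by (simp add: ennreal_le_iff wvol_def)
qed

lemma wvol_ball_growth:
  assumes \<alpha>: "0 \<le> \<alpha>"
  obtains c0 where "0 < c0"
    "\<And>x \<rho>. 0 < \<rho> \<Longrightarrow> c0 * \<rho> powr (real CARD('n) + \<alpha>) \<le> wvol (\<lambda>y. rpow (g y) \<alpha>) (ball x \<rho>)"
proof
  define \<mu>1 where "\<mu>1 = measure lborel (ball (0::real^'n) 1)"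
  have \<mu>1: "0 < \<mu>1" unfolding \<mu>1_def using content_ball_pos[of 1 "0::real^'n"] by simp
  show "0 < (1/4) powr \<alpha> * (1/4) ^ CARD('n) * \<mu>1" using \<mu>1 by simp
  fix x and \<rho> :: real assume \<rho>: "0 < \<rho>"
  have "(1/4) powr \<alpha> * (1/4) ^ CARD('n) * \<mu>1 * \<rho> powr (real CARD('n) + \<alpha>)
      = (\<rho>/4) powr \<alpha> * ((\<rho>/4) ^ CARD('n) * \<mu>1)"
    using \<rho> by (simp add: powr_add powr_realpow powr_divide power_divide field_simps)
  also have "(\<rho>/4) ^ CARD('n) * \<mu>1 = measure lborel (ball (0::real^'n) (\<rho>/4))"
    using content_ball_conv_unit_ball[of "\<rho>/4" "0::real^'n"] \<rho> by (simp add: \<mu>1_def)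
  also have "(\<rho>/4) powr \<alpha> * \<dots> \<le> wvol (\<lambda>y. rpow (g y) \<alpha>) (ball x \<rho>)"
    by (rule wvol_ball_ge[OF \<alpha> \<rho>])
  finally show "(1/4) powr \<alpha> * (1/4) ^ CARD('n) * \<mu>1 * \<rho> powr (real CARD('n) + \<alpha>)
      \<le> wvol (\<lambda>y. rpow (g y) \<alpha>) (ball x \<rho>)" .
qed

end

lemma lipschitz_gauge_abs_component: "lipschitz_gauge (\<lambda>x::real^'n::finite. \<bar>x $ i\<bar>)"
proof
  show "\<bar>z $ i\<bar> \<le> \<bar>y $ i\<bar> + dist y z" for y z :: "real^'n"
    using component_le_norm_cart[of "z - y" i] by (simp add: dist_norm norm_minus_commute)
  show "\<exists>z. dist x z \<le> \<rho>/2 \<and> \<rho>/2 \<le> \<bar>z $ i\<bar>" if "0 < \<rho>" for x :: "real^'n" and \<rho>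
  proof -
    define c where "c = (if 0 \<le> x $ i then \<rho>/2 else - (\<rho>/2))"
    define z where "z = x + c *\<^sub>R axis i 1"
    have "dist x z = \<rho>/2" using that by (simp add: z_def c_def dist_norm)
    moreover have "\<rho>/2 \<le> \<bar>z $ i\<bar>" using that by (auto simp: z_def c_def axis_def)
    ultimately show ?thesis by auto
  qed
qed auto

lemma lipschitz_gauge_norm: "lipschitz_gauge (norm :: real^'n::finite \<Rightarrow> real)"
proof
  show "norm z \<le> norm y + dist y z" for y z :: "real^'n"
    using norm_triangle_ineq[of y "z - y"] by (simp add: dist_norm norm_minus_commute)
  show "\<exists>z. dist x z \<le> \<rho>/2 \<and> \<rho>/2 \<le> norm z" if "0 < \<rho>" for x :: "real^'n" and \<rho>
  proof (cases "x = 0")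
    case True
    then show ?thesis using that by (intro exI[of _ "(\<rho>/2) *\<^sub>R axis undefined 1"]) auto
  next
    case False
    define z where "z = (1 + \<rho>/(2 * norm x)) *\<^sub>R x"
    have "z - x = (\<rho>/(2 * norm x)) *\<^sub>R x" by (simp add: z_def algebra_simps)
    then have "dist x z = norm ((\<rho>/(2 * norm x)) *\<^sub>R x)" by (metis dist_commute dist_norm)
    also have "\<dots> = \<rho>/2" using False that by simp
    finally have "dist x z = \<rho>/2" .
    moreover have "norm z = norm x + \<rho>/2" using False that
      by (simp add: z_def abs_of_nonneg field_simps)
    ultimately show ?thesis by auto
  qed
qed auto

lemma weight_cases:
  fixes w :: "real^'n::finite \<Rightarrow> real"
  assumes "(\<exists>i a. 0 \<le> a \<and> a < 1 \<and> w = wA i a \<and> \<alpha> = a) \<or>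
           (\<exists>b. 0 \<le> b \<and> b < real CARD('n) \<and> w = wB b \<and> \<alpha> = b)"
  obtains g where "lipschitz_gauge g" "0 \<le> \<alpha>" "w = (\<lambda>y. rpow (g y) \<alpha>)"
  using assms lipschitz_gauge_abs_component lipschitz_gauge_norm
  by (auto simp: wA_def[abs_def] wB_def[abs_def])

section \<open>Weak Lorentz quasi-norms\<close>

lemma distf_antimono:
  assumes "f \<in> borel_measurable borel" "l \<le> l'"
  shows "distf w f l' \<le> distf w f l"
  unfolding distf_def using assms by (intro emeasure_mono) auto

lemma rearr_ge:
  assumes f: "f \<in> borel_measurable borel" and s: "ennreal s < distf w f l"
  shows "ennreal l \<le> rearr w f s"
  unfolding rearr_def
proof (rule INF_greatest)
  fix l' assume "l' \<in> {l'. 0 < l' \<and> distf w f l' \<le> ennreal s}"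
  then have "distf w f l' < distf w f l" using s by auto
  then have "l \<le> l'" using distf_antimono[OF f] by (meson leD linorder_le_cases)
  then show "ennreal l \<le> ennreal l'" by (rule ennreal_leI)
qed

lemma wlnorm_ge: "0 < s \<Longrightarrow> ennreal (s powr einv r) * rearr w f s \<le> wlnorm w r f"
  unfolding wlnorm_def by (rule SUP_upper) auto

lemma ennreal_dense_real:
  fixes a b :: ennreal
  assumes "a < b"
  obtains s where "a < ennreal s" "ennreal s < b"
proof -
  obtain y where y: "a < y" "y < b" using dense[OF assms] by blast
  then have "y < top" using top.not_eq_extremum by fastforce
  then obtain s where "y = ennreal s" by (cases y rule: ennreal_cases) auto
  then show ?thesis using y that by auto
qed

lemma ennreal_le_if_less_imp_le:
  fixes x :: ennreal
  assumes "\<And>l. b < l \<Longrightarrow> x \<le> ennreal l" and "0 \<le> b"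
  shows "x \<le> ennreal b"
proof (rule ennreal_le_epsilon)
  fix e :: real assume "0 < e"
  then have "x \<le> ennreal (b + e)" using assms(1) by simp
  then show "x \<le> ennreal b + ennreal e" using assms(2) \<open>0 < e\<close> by (simp add: ennreal_plus)
qed

lemma distf_le_if_wlnorm_le:
  assumes f: "f \<in> borel_measurable borel" and wl: "wlnorm w (ereal q) f \<le> ennreal m"
    and q: "0 < q" and m: "0 \<le> m" and l: "0 < l"
  shows "distf w f l \<le> ennreal ((m/l) powr q)"
proof (rule ccontr)
  assume "\<not> ?thesis"
  then have "ennreal ((m/l) powr q) < distf w f l" by simp
  then obtain s where s: "ennreal ((m/l) powr q) < ennreal s" "ennreal s < distf w f l"
    by (rule ennreal_dense_real)
  have sq: "(m/l) powr q < s" using s(1) by (simp add: ennreal_less_iff)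
  then have s0: "0 < s" by (smt (verit) powr_ge_zero)
  have "ennreal (s powr (1/q)) * ennreal l \<le> ennreal (s powr einv (ereal q)) * rearr w f s"
    using rearr_ge[OF f s(2)] by (simp add: einv_def mult_left_mono)
  also have "\<dots> \<le> ennreal m" using wlnorm_ge[OF s0] wl by (rule order.trans)
  finally have "s powr (1/q) * l \<le> m" using m l by (simp add: ennreal_mult[symmetric])
  then have "s powr (1/q) \<le> m / l" using l by (simp add: field_simps)
  then have "(s powr (1/q)) powr q \<le> (m/l) powr q" using q by (intro powr_mono2) auto
  then show False using q s0 sq by (simp add: powr_powr)
qed

lemma distf_eq_0_if_wlnorm_infinity_le:
  assumes f: "f \<in> borel_measurable borel" and wl: "wlnorm w \<infinity> f \<le> ennreal m"
    and m: "0 \<le> m" and l: "m < l"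
  shows "distf w f l = 0"
proof (rule ccontr)
  assume "distf w f l \<noteq> 0"
  then have "ennreal 0 < distf w f l" by (simp add: zero_less_iff_neq_zero)
  then obtain s where s: "ennreal 0 < ennreal s" "ennreal s < distf w f l"
    by (rule ennreal_dense_real)
  have s0: "0 < s" using s(1) by (simp add: ennreal_less_iff)
  have "ennreal l \<le> ennreal (s powr einv \<infinity>) * rearr w f s"
    using rearr_ge[OF f s(2)] s0 by (simp add: einv_def)
  also have "\<dots> \<le> ennreal m" using wlnorm_ge[OF s0] wl by (rule order.trans)
  finally show False using l m by (simp add: ennreal_le_iff)
qed

lemma wlnorm_le_if_distf_le:
  assumes r: "0 < r" and B: "0 \<le> B"
    and d: "\<And>l. 0 < l \<Longrightarrow> distf w f l \<le> ennreal ((B/l) powr r)"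
  shows "wlnorm w (ereal r) f \<le> ennreal B"
  unfolding wlnorm_def
proof (rule SUP_least)
  fix s :: real assume "s \<in> {0<..}"
  then have s: "0 < s" by simp
  define \<beta> where "\<beta> = B * s powr (-1/r)"
  have \<beta>: "0 \<le> \<beta>" using B by (simp add: \<beta>_def)
  have "rearr w f s \<le> ennreal \<beta>"
  proof (rule ennreal_le_if_less_imp_le[OF _ \<beta>])
    fix l assume l: "\<beta> < l"
    then have l0: "0 < l" using \<beta> by simp
    have "(B/l) powr r \<le> s"
    proof (cases "B = 0")
      case True then show ?thesis using s by simp
    next
      case False
      have "B = \<beta> * s powr (1/r)"
        using s by (simp add: \<beta>_def mult.assoc powr_add[symmetric])
      also have "\<dots> < l * s powr (1/r)"
        using l s by (intro mult_strict_right_mono) auto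
      finally have "B/l < s powr (1/r)" using l0 by (simp add: field_simps)
      then have "(B/l) powr r < (s powr (1/r)) powr r" using r B l0 False
        by (intro powr_less_mono2) auto
      then show ?thesis using s r by (simp add: powr_powr)
    qed
    then have "distf w f l \<le> ennreal s" using d[OF l0] by (meson ennreal_leI order.trans)
    then show "rearr w f s \<le> ennreal l" unfolding rearr_def
      using l0 by (intro INF_lower2[of l]) auto
  qed
  then have "ennreal (s powr einv (ereal r)) * rearr w f s \<le> ennreal (s powr (1/r)) * ennreal \<beta>"
    by (simp add: einv_def mult_left_mono)
  also have "\<dots> = ennreal B" using s B
    by (simp add: ennreal_mult[symmetric] \<beta>_def powr_add[symmetric] mult.left_commute)
  finally show "ennreal (s powr einv (ereal r)) * rearr w f s \<le> ennreal B" .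
qed

lemma wlnorm_infinity_le_if_distf_eq_0:
  assumes B: "0 \<le> B" and d: "\<And>l. B < l \<Longrightarrow> distf w f l = 0"
  shows "wlnorm w \<infinity> f \<le> ennreal B"
  unfolding wlnorm_def
proof (rule SUP_least)
  fix s :: real assume "s \<in> {0<..}"
  have "rearr w f s \<le> ennreal B"
  proof (rule ennreal_le_if_less_imp_le[OF _ B])
    fix l assume "B < l"
    then show "rearr w f s \<le> ennreal l" unfolding rearr_def
      using B d by (intro INF_lower2[of l]) auto
  qed
  then show "ennreal (s powr einv \<infinity>) * rearr w f s \<le> ennreal B" by (simp add: einv_def)
qed

lemma einv_nonneg: "0 \<le> q \<Longrightarrow> 0 \<le> einv q"
  by (cases q) (auto simp: einv_def)

lemma einv_le_one: "1 \<le> q \<Longrightarrow> einv q \<le> 1"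
  by (cases q) (auto simp: einv_def)

lemma einv_antimono: "0 < q \<Longrightarrow> q \<le> r \<Longrightarrow> einv r \<le> einv q"
  by (cases q; cases r) (auto simp: einv_def frac_le)

lemma einv_diff_bounds:
  assumes "1 \<le> q" "q \<le> r"
  shows "0 \<le> einv q - einv r" "einv q - einv r \<le> 1"
proof -
  have "0 < q" using assms(1) order.strict_trans2[of 0 1 q] by simp
  then have "0 \<le> r" using assms(2) by (meson less_imp_le order.trans)
  then show "0 \<le> einv q - einv r" "einv q - einv r \<le> 1"
    using assms \<open>0 < q\<close> einv_antimono[of q r] einv_le_one[of q] einv_nonneg[of r] by auto
qed

section \<open>The dyadic layer-cake bound\<close>

definition dyadic_const :: "real \<Rightarrow> real" where
  "dyadic_const q = 2 / (1 - 2 powr (1 - q))"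

lemma dyadic_const_ge_one: "1 < q \<Longrightarrow> 1 \<le> dyadic_const q"
  using powr_less_one[of 2 "1 - q"] by (simp add: dyadic_const_def field_simps)

lemma dyadic_const_antimono: "1 < p \<Longrightarrow> p \<le> q \<Longrightarrow> dyadic_const q \<le> dyadic_const p"
  using powr_less_one[of 2 "1 - p"] powr_less_one[of 2 "1 - q"] powr_mono[of "1 - q" "1 - p" 2]
  unfolding dyadic_const_def by (intro divide_left_mono) auto

definition upper_part :: "('a \<Rightarrow> real) \<Rightarrow> real \<Rightarrow> 'a \<Rightarrow> real" where
  "upper_part \<phi> A y = \<bar>\<phi> y\<bar> * indicator {y. A < \<bar>\<phi> y\<bar>} y"

lemma upper_part_nonneg[simp]: "0 \<le> upper_part \<phi> A y"
  by (simp add: upper_part_def)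

lemma borel_measurable_upper_part[measurable]:
  assumes [measurable]: "\<phi> \<in> borel_measurable borel"
  shows "upper_part \<phi> A \<in> borel_measurable borel"
  unfolding upper_part_def by measurable

lemma abs_le_upper_part_plus: "0 \<le> A \<Longrightarrow> \<bar>\<phi> y\<bar> \<le> upper_part \<phi> A y + A"
  by (auto simp: upper_part_def indicator_def)

lemma dyadic_bracket:
  fixes A x :: real
  assumes A: "0 < A" and x: "A < x"
  obtains j :: nat where "2^j * A < x" "x \<le> 2^(Suc j) * A"
proof -
  obtain n :: nat where "x / A < 2 ^ n" using real_arch_pow[of 2 "x/A"] by auto
  then have "x < 2^n * A" using A by (simp add: field_simps)
  moreover have "2^n * A \<le> 2^(Suc n) * A" using A by simp
  ultimately have "x \<le> 2^(Suc n) * A" by linarith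
  then have ex: "\<exists>j. x \<le> 2^(Suc j) * A" by blast
  define j where "j = (LEAST j. x \<le> 2^(Suc j) * A)"
  have j: "x \<le> 2^(Suc j) * A" unfolding j_def using ex by (rule LeastI_ex)
  have "2^j * A < x"
  proof (cases j)
    case 0 then show ?thesis using x by simp
  next
    case (Suc i)
    then have "\<not> x \<le> 2^(Suc i) * A" unfolding j_def by (metis lessI not_less_Least)
    then show ?thesis using Suc by simp
  qed
  then show ?thesis using j that by blast
qed

lemma dyadic_term_eq:
  fixes A M q :: real assumes A: "0 < A"
  shows "2^(Suc k) * A * (M/(2^k*A)) powr q = 2*A*(M/A) powr q * (2 powr (1-q))^k"
proof -
  have "M/(2^k*A) = (M/A)/2^k" by simp
  then have "(M/(2^k*A)) powr q = (M/A) powr q / (2^k) powr q"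
    by (simp only: powr_divide)
  also have "((2::real)^k) powr q = (2 powr real k) powr q" by (simp add: powr_realpow)
  also have "\<dots> = 2 powr (real k * q)" by (simp add: powr_powr)
  finally have e1: "(M/(2^k*A)) powr q = (M/A) powr q / 2 powr (real k * q)" .
  have e2: "(2 powr (1-q))^k = 2 powr (real k * (1-q))" by (simp add: powr_power)
  have e3: "(2::real)^(Suc k) = 2 * 2 powr real k" by (simp add: powr_realpow)
  show ?thesis unfolding e1 e2 e3
    by (simp add: right_diff_distrib powr_diff)
qed

text \<open>Summing the weak-type bound \<open>w{|\<phi>| > 2\<^sup>k A} \<le> (M / 2\<^sup>k A)\<^sup>q\<close> over the dyadic layers
  gives a geometric series with ratio \<open>2\<^sup>1\<^sup>-\<^sup>q\<close>.\<close>

lemma nn_integral_upper_part_le: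
  fixes \<phi> w :: "real^'n::finite \<Rightarrow> real"
  assumes wm: "w \<in> borel_measurable borel" and f: "\<phi> \<in> borel_measurable borel"
    and d: "\<And>l. 0 < l \<Longrightarrow> distf w \<phi> l \<le> ennreal ((M/l) powr q)"
    and q: "1 < q" and A: "0 < A"
  shows "(\<integral>\<^sup>+ y. ennreal (upper_part \<phi> A y) \<partial>wmeasure w) \<le> ennreal (A * (M/A) powr q * dyadic_const q)"
proof -
  define S where "S k = {y. 2^k * A < \<bar>\<phi> y\<bar>}" for k :: nat
  have Sm: "S k \<in> sets (wmeasure w)" for k unfolding S_def using f by simp
  define \<rho> where "\<rho> = (2::real) powr (1-q)"
  have \<rho>: "0 < \<rho>" "\<rho> < 1" unfolding \<rho>_def using q by (auto intro: powr_less_one)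
  define c where "c = 2*A*(M/A) powr q"
  have c: "0 \<le> c" using A by (simp add: c_def)
  have layers: "ennreal (upper_part \<phi> A y) \<le> (\<Sum>k. ennreal (2^(Suc k) * A) * indicator (S k) y)" for y
  proof (cases "A < \<bar>\<phi> y\<bar>")
    case True
    then obtain j where j: "2^j * A < \<bar>\<phi> y\<bar>" "\<bar>\<phi> y\<bar> \<le> 2^(Suc j) * A" using dyadic_bracket[OF A] by blast
    then have "ennreal (upper_part \<phi> A y) \<le> ennreal (2^(Suc j) * A) * indicator (S j) y"
      using True by (simp add: upper_part_def S_def ennreal_leI del: power_Suc)
    also have "\<dots> \<le> (\<Sum>k. ennreal (2^(Suc k) * A) * indicator (S k) y)"
    proof -
      define g where "g k = ennreal (2^(Suc k) * A) * indicator (S k) y" for k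
      have "sum g {j} \<le> suminf g" by (rule sum_le_suminf[OF summableI]) auto
      then have "g j \<le> suminf g" by simp
      then show ?thesis unfolding g_def .
    qed
    finally show ?thesis .
  qed (simp add: upper_part_def)
  have "(\<integral>\<^sup>+ y. ennreal (upper_part \<phi> A y) \<partial>wmeasure w)
     \<le> (\<integral>\<^sup>+ y. (\<Sum>k. ennreal (2^(Suc k) * A) * indicator (S k) y) \<partial>wmeasure w)"
    by (intro nn_integral_mono layers)
  also have "\<dots> = (\<Sum>k. ennreal (2^(Suc k) * A) * emeasure (wmeasure w) (S k))"
    using Sm by (subst nn_integral_suminf) (auto simp: nn_integral_cmult_indicator)
  also have "\<dots> \<le> (\<Sum>k. ennreal (c * \<rho>^k))"
  proof (intro suminf_le summableI)
    fix k
    have "emeasure (wmeasure w) (S k) = distf w \<phi> (2^k * A)" by (simp add: S_def distf_def)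
    also have "\<dots> \<le> ennreal ((M/(2^k*A)) powr q)" using d[of "2^k*A"] A by simp
    finally have "ennreal (2^(Suc k) * A) * emeasure (wmeasure w) (S k)
        \<le> ennreal (2^(Suc k) * A) * ennreal ((M/(2^k*A)) powr q)" by (rule mult_left_mono) simp
    also have "\<dots> = ennreal (c * \<rho>^k)" using A
      by (simp add: ennreal_mult[symmetric] dyadic_term_eq c_def \<rho>_def del: power_Suc)
    finally show "ennreal (2^(Suc k) * A) * emeasure (wmeasure w) (S k) \<le> ennreal (c * \<rho>^k)" .
  qed
  also have "\<dots> = ennreal (\<Sum>k. c * \<rho>^k)"
    using \<rho> c by (intro suminf_ennreal2 summable_mult summable_geometric) auto
  also have "(\<Sum>k. c * \<rho>^k) = A * (M/A) powr q * dyadic_const q"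
    using \<rho> by (simp add: suminf_mult suminf_geometric summable_geometric c_def \<rho>_def dyadic_const_def)
  finally show ?thesis .
qed

lemma dyadic_const_powr_le:
  assumes "1 < p" "p \<le> q"
  shows "dyadic_const q powr (1/q) \<le> dyadic_const p"
proof -
  have "dyadic_const q powr (1/q) \<le> dyadic_const q powr 1"
    using assms dyadic_const_ge_one[of q] by (intro powr_mono) auto
  also have "\<dots> \<le> dyadic_const p"
    using assms dyadic_const_ge_one[of q] dyadic_const_antimono[of p q] by simp
  finally show ?thesis .
qed

lemma powr_interpolation_le:
  fixes D K X q r :: real
  assumes D: "0 < D" and K: "0 < K" and X: "0 \<le> X" and q: "1 < q" and qr: "q \<le> r"
    and large: "1 < K * D * X powr q"
  shows "D * X powr q \<le> (D powr (1/q) * K powr (1/q - 1/r) * X) powr r"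
proof -
  have X0: "0 < X" using large X by (cases "X = 0") auto
  have e: "0 \<le> r/q - 1" using q qr by (simp add: field_simps)
  have "1 \<le> (K * D * X powr q) powr (r/q - 1)" using large e by (intro ge_one_powr_ge_zero) auto
  then have "D * X powr q * 1 \<le> D * X powr q * (K * D * X powr q) powr (r/q - 1)"
    using D X0 by (intro mult_left_mono) auto
  also have "\<dots> = D powr (r/q) * K powr (r/q - 1) * X powr r"
  proof -
    have "D powr (r/q) = D powr (1 + (r/q - 1))" by simp
    also have "\<dots> = D powr 1 * D powr (r/q - 1)" by (rule powr_add)
    finally have hD: "D powr (r/q) = D * D powr (r/q - 1)" using D by simp
    have "X powr r = X powr (q + q * (r/q - 1))" using q by (simp add: field_simps)
    also have "\<dots> = X powr q * (X powr q) powr (r/q - 1)" by (simp add: powr_add powr_powr)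
    finally have hX: "X powr r = X powr q * (X powr q) powr (r/q - 1)" .
    show ?thesis unfolding hD hX using D K X0 by (simp add: powr_mult mult_ac)
  qed
  also have "\<dots> = (D powr (1/q) * K powr (1/q - 1/r) * X) powr r"
  proof -
    have ex: "(1/q - 1/r) * r = r/q - 1" "1/q * r = r/q" using q qr by (auto simp: field_simps)
    have "(D powr (1/q) * K powr (1/q - 1/r) * X) powr r
        = D powr (1/q * r) * K powr ((1/q - 1/r) * r) * X powr r"
      by (simp only: powr_mult powr_powr)
    then show ?thesis by (simp only: ex)
  qed
  finally show ?thesis by simp
qed

lemma mult_powr_le_one_if_large:
  fixes D K M l q :: real
  assumes D: "0 < D" and K: "0 < K" and M: "0 \<le> M" and q: "1 < q" and l: "0 < l"
    and large: "2 * D powr (1/q) * K powr (1/q) * M \<le> l"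
  shows "K * D * (2*M/l) powr q \<le> 1"
proof (cases "M = 0")
  case True then show ?thesis by simp
next
  case False
  have P: "0 < D powr (1/q) * K powr (1/q)" using D K by simp
  have "2*M/l \<le> 1 / (D powr (1/q) * K powr (1/q))"
    using large l P by (simp add: field_simps)
  then have "(2*M/l) powr q \<le> (1 / (D powr (1/q) * K powr (1/q))) powr q"
    using M l q by (intro powr_mono2) auto
  also have "\<dots> = 1 / (K * D)"
    using D K q by (simp add: powr_divide powr_mult powr_powr)
  finally have "K * D * (2*M/l) powr q \<le> K * D * (1 / (K * D))"
    using D K by (intro mult_left_mono) auto
  then show ?thesis using D K by simp
qed

lemma powr_mult_powr_le_max:
  fixes \<kappa> t a e :: real
  assumes \<kappa>: "0 < \<kappa>" and t: "0 < t" and e: "0 \<le> e" "e \<le> 1"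
  shows "(\<kappa> * t powr a) powr e \<le> max 1 \<kappa> * t powr (a * e)"
proof -
  have "\<kappa> powr e \<le> max 1 \<kappa>"
  proof (cases "1 \<le> \<kappa>")
    case True
    then have "\<kappa> powr e \<le> \<kappa> powr 1" using e by (intro powr_mono) auto
    then show ?thesis using \<kappa> by simp
  next
    case False
    then show ?thesis using \<kappa> e powr_le1[of e \<kappa>] by auto
  qed
  then show ?thesis using \<kappa> t by (simp add: powr_mult powr_powr)
qed

section \<open>Doubly stochastic kernels\<close>

lemma nn_integral_eq_one_if_integral_eq_one:
  fixes f :: "'a \<Rightarrow> real"
  assumes "(LINT x|M. f x) = 1" "\<And>x. 0 \<le> f x"
  shows "(\<integral>\<^sup>+ x. ennreal (f x) \<partial>M) = 1"
proof -
  have "integrable M f" using assms(1) not_integrable_integral_eq by fastforce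
  then show ?thesis using assms by (subst nn_integral_eq_integral) auto
qed

lemma kernel_ok_nonneg:
  assumes K: "kernel_ok w cs Cs \<Gamma>" and cs: "0 < cs" and t: "0 < t"
  shows "0 \<le> \<Gamma> x y t"
proof -
  let ?V = "sqrt (wvol w (ball x (sqrt t)) * wvol w (ball y (sqrt t)))"
  have "cs * exp (- (dist x y)\<^sup>2 / (cs * t)) \<le> ?V * \<Gamma> x y t"
    using K t unfolding kernel_ok_def by blast
  then have "0 < ?V * \<Gamma> x y t" using cs by (smt (verit) exp_gt_zero mult_pos_pos)
  moreover have "0 \<le> ?V" unfolding wvol_def by simp
  ultimately show ?thesis by (simp add: zero_less_mult_iff)
qed

lemma kernel_ok_le:
  assumes K: "kernel_ok w cs Cs \<Gamma>" and cs: "0 < cs" and Cs: "0 < Cs" and t: "0 < t"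
    and c0: "0 < c0" and vol: "\<And>x \<rho>. 0 < \<rho> \<Longrightarrow> c0 * \<rho> powr \<beta> \<le> wvol w (ball x \<rho>)"
  shows "\<Gamma> x y t \<le> Cs / c0 * t powr (- (\<beta> / 2))"
proof -
  let ?V = "sqrt (wvol w (ball x (sqrt t)) * wvol w (ball y (sqrt t)))"
  define T where "T = t powr (\<beta> / 2)"
  have T: "0 < T" using t by (simp add: T_def)
  have "sqrt t powr \<beta> = T"
    using t by (simp add: T_def powr_powr powr_half_sqrt[symmetric])
  then have "c0 * T \<le> wvol w (ball x (sqrt t))" "c0 * T \<le> wvol w (ball y (sqrt t))"
    using vol[of "sqrt t"] t by auto
  then have "sqrt ((c0 * T) * (c0 * T)) \<le> ?V"
    using c0 T by (intro real_sqrt_le_mono mult_mono) (auto simp: wvol_def)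
  then have "c0 * T * \<Gamma> x y t \<le> ?V * \<Gamma> x y t"
    using c0 T kernel_ok_nonneg[OF K cs t] by (intro mult_right_mono) auto
  also have "\<dots> \<le> Cs * exp (- (dist x y)\<^sup>2 / (Cs * t))"
    using K t unfolding kernel_ok_def by blast
  also have "\<dots> \<le> Cs" using Cs t by simp
  finally show ?thesis
    using c0 T t by (simp add: T_def field_simps powr_minus)
qed

locale doubly_stochastic_kernel =
  fixes w :: "real^'n::finite \<Rightarrow> real" and \<Gamma> :: "real^'n \<Rightarrow> real^'n \<Rightarrow> real \<Rightarrow> real"
    and t K :: real
  assumes weight_nonneg: "\<And>x. 0 \<le> w x"
    and weight_measurable[measurable]: "w \<in> borel_measurable borel"
    and kernel_measurable: "(\<lambda>(x, y). \<Gamma> x y t) \<in> borel_measurable borel"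
    and kernel_nonneg: "\<And>x y. 0 \<le> \<Gamma> x y t"
    and kernel_le: "\<And>x y. \<Gamma> x y t \<le> K"
    and integral_kernel_right: "\<And>x. (\<integral>\<^sup>+ y. ennreal (\<Gamma> x y t * w y) \<partial>lborel) = 1"
    and integral_kernel_left: "\<And>y. (\<integral>\<^sup>+ x. ennreal (\<Gamma> x y t * w x) \<partial>lborel) = 1"

lemma kernel_ok_imp_doubly_stochastic_kernel:
  assumes K: "kernel_ok w cs Cs \<Gamma>" and cs: "0 < cs" and Cs: "0 < Cs" and t: "0 < t"
    and c0: "0 < c0" and vol: "\<And>x \<rho>. 0 < \<rho> \<Longrightarrow> c0 * \<rho> powr \<beta> \<le> wvol w (ball x \<rho>)"
    and wnn: "\<And>x. 0 \<le> w x" and wm: "w \<in> borel_measurable borel"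
  shows "doubly_stochastic_kernel w \<Gamma> t (Cs / c0 * t powr (- (\<beta> / 2)))"
proof
  show "0 \<le> \<Gamma> x y t" for x y by (rule kernel_ok_nonneg[OF K cs t])
  show "\<Gamma> x y t \<le> Cs / c0 * t powr (- (\<beta> / 2))" for x y by (rule kernel_ok_le[OF K cs Cs t c0 vol])
  show "(\<integral>\<^sup>+ y. ennreal (\<Gamma> x y t * w y) \<partial>lborel) = 1" for x
    using K t kernel_ok_nonneg[OF K cs t] wnn unfolding kernel_ok_def
    by (intro nn_integral_eq_one_if_integral_eq_one) auto
  show "(\<integral>\<^sup>+ x. ennreal (\<Gamma> x y t * w x) \<partial>lborel) = 1" for y
    using K t kernel_ok_nonneg[OF K cs t] wnn unfolding kernel_ok_def
    by (intro nn_integral_eq_one_if_integral_eq_one) auto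
qed (use K t wnn wm in \<open>auto simp: kernel_ok_def\<close>)

context doubly_stochastic_kernel
begin

lemma kernel_measurable_pair[measurable]:
  "(\<lambda>p. \<Gamma> (fst p) (snd p) t) \<in> borel_measurable (lborel \<Otimes>\<^sub>M lborel)"
proof -
  have "(\<lambda>p. \<Gamma> (fst p) (snd p) t) = (\<lambda>(x, y). \<Gamma> x y t)" by auto
  then show ?thesis using kernel_measurable by (simp add: lborel_prod)
qed

lemma kernel_measurable_right[measurable]: "(\<lambda>y. \<Gamma> x y t) \<in> borel_measurable borel"
  using measurable_compose[OF _ kernel_measurable, of "\<lambda>y. (x, y)"] by simp

lemma kernel_measurable_left[measurable]: "(\<lambda>x. \<Gamma> x y t) \<in> borel_measurable borel"
  using measurable_compose[OF _ kernel_measurable, of "\<lambda>x. (x, y)"] by simp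

lemma kernel_bound_nonneg: "0 \<le> K"
  using kernel_nonneg kernel_le order.trans by blast

text \<open>Taking the extended integral avoids all integrability side conditions.\<close>

definition kop :: "(real^'n \<Rightarrow> real) \<Rightarrow> real^'n \<Rightarrow> ennreal" where
  "kop g x = (\<integral>\<^sup>+ y. ennreal (\<Gamma> x y t * g y * w y) \<partial>lborel)"

lemma borel_measurable_kop[measurable]:
  assumes [measurable]: "g \<in> borel_measurable borel"
  shows "kop g \<in> borel_measurable borel"
proof -
  have "(\<lambda>x. \<integral>\<^sup>+ y. ennreal (\<Gamma> x y t * g y * w y) \<partial>lborel) \<in> borel_measurable lborel"
    by (rule lborel.borel_measurable_nn_integral) measurable
  then show ?thesis unfolding kop_def[abs_def] by simp
qed

lemma abs_Sop_le_kop: "ennreal \<bar>Sop w \<Gamma> t \<phi> x\<bar> \<le> kop (\<lambda>y. \<bar>\<phi> y\<bar>) x"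
proof (cases "integrable lborel (\<lambda>y. \<Gamma> x y t * \<phi> y * w y)")
  case True
  have "ennreal \<bar>Sop w \<Gamma> t \<phi> x\<bar> \<le> (\<integral>\<^sup>+ y. norm (\<Gamma> x y t * \<phi> y * w y) \<partial>lborel)"
    unfolding Sop_def using integral_norm_bound_ennreal[OF True] by simp
  also have "\<dots> = kop (\<lambda>y. \<bar>\<phi> y\<bar>) x" unfolding kop_def
    using kernel_nonneg weight_nonneg by (intro nn_integral_cong) (simp add: abs_mult)
  finally show ?thesis .
qed (simp add: Sop_def not_integrable_integral_eq)

lemma kop_abs_le:
  assumes [measurable]: "\<phi> \<in> borel_measurable borel" and A: "0 \<le> A"
  shows "kop (\<lambda>y. \<bar>\<phi> y\<bar>) x \<le> kop (upper_part \<phi> A) x + ennreal A"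
proof -
  have "kop (\<lambda>y. \<bar>\<phi> y\<bar>) x \<le> (\<integral>\<^sup>+ y. ennreal (\<Gamma> x y t * upper_part \<phi> A y * w y)
      + ennreal A * ennreal (\<Gamma> x y t * w y) \<partial>lborel)"
    unfolding kop_def
  proof (intro nn_integral_mono)
    fix y
    have "\<Gamma> x y t * \<bar>\<phi> y\<bar> * w y \<le> \<Gamma> x y t * (upper_part \<phi> A y + A) * w y"
      using kernel_nonneg[of x y] weight_nonneg[of y] abs_le_upper_part_plus[OF A]
      by (intro mult_right_mono mult_left_mono) auto
    then show "ennreal (\<Gamma> x y t * \<bar>\<phi> y\<bar> * w y)
        \<le> ennreal (\<Gamma> x y t * upper_part \<phi> A y * w y) + ennreal A * ennreal (\<Gamma> x y t * w y)"
      using A kernel_nonneg[of x y] weight_nonneg[of y]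
      by (simp add: ennreal_mult[symmetric] ennreal_plus[symmetric] ennreal_leI algebra_simps
          del: ennreal_plus)
  qed
  also have "\<dots> = kop (upper_part \<phi> A) x + ennreal A * (\<integral>\<^sup>+ y. ennreal (\<Gamma> x y t * w y) \<partial>lborel)"
    unfolding kop_def by (subst nn_integral_add) (auto simp: nn_integral_cmult)
  also have "\<dots> = kop (upper_part \<phi> A) x + ennreal A" using integral_kernel_right by simp
  finally show ?thesis .
qed

lemma kop_le:
  assumes [measurable]: "g \<in> borel_measurable borel" and g: "\<And>y. 0 \<le> g y"
  shows "kop g x \<le> ennreal K * integral\<^sup>N (wmeasure w) (\<lambda>y. ennreal (g y))"
proof -
  have "kop g x \<le> (\<integral>\<^sup>+ y. ennreal K * (ennreal (w y) * ennreal (g y)) \<partial>lborel)"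
    unfolding kop_def
  proof (intro nn_integral_mono)
    fix y
    have "\<Gamma> x y t * g y * w y \<le> K * (w y * g y)"
      using mult_right_mono[OF kernel_le[of x y], of "w y * g y"] g[of y] weight_nonneg[of y]
      by (simp add: mult_ac)
    then show "ennreal (\<Gamma> x y t * g y * w y) \<le> ennreal K * (ennreal (w y) * ennreal (g y))"
      using g[of y] weight_nonneg[of y] kernel_bound_nonneg by (simp add: ennreal_mult[symmetric] ennreal_leI)
  qed
  also have "\<dots> = ennreal K * integral\<^sup>N (wmeasure w) (\<lambda>y. ennreal (g y))"
    by (simp add: nn_integral_cmult nn_integral_wmeasure)
  finally show ?thesis .
qed

lemma nn_integral_kop:
  assumes [measurable]: "g \<in> borel_measurable borel" and g: "\<And>y. 0 \<le> g y"
  shows "integral\<^sup>N (wmeasure w) (kop g) = integral\<^sup>N (wmeasure w) (\<lambda>y. ennreal (g y))"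
proof -
  have "integral\<^sup>N (wmeasure w) (kop g)
      = (\<integral>\<^sup>+ x. (\<integral>\<^sup>+ y. ennreal (\<Gamma> x y t * w x) * ennreal (g y * w y) \<partial>lborel) \<partial>lborel)"
    unfolding nn_integral_wmeasure[OF weight_measurable borel_measurable_kop[OF assms(1)]] kop_def
    by (subst nn_integral_cmult[symmetric])
      (auto intro!: nn_integral_cong simp: ennreal_mult[symmetric] kernel_nonneg weight_nonneg g mult_ac)
  also have "\<dots> = (\<integral>\<^sup>+ y. (\<integral>\<^sup>+ x. ennreal (\<Gamma> x y t * w x) * ennreal (g y * w y) \<partial>lborel) \<partial>lborel)"
    by (rule lborel_pair.Fubini'[symmetric]) measurable
  also have "\<dots> = (\<integral>\<^sup>+ y. ennreal (g y * w y) \<partial>lborel)"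
    by (subst nn_integral_multc) (auto simp: integral_kernel_left)
  also have "\<dots> = integral\<^sup>N (wmeasure w) (\<lambda>y. ennreal (g y))"
    by (simp add: nn_integral_wmeasure ennreal_mult[symmetric] g weight_nonneg mult.commute)
  finally show ?thesis .
qed

lemma emeasure_kop_level_le:
  assumes [measurable]: "g \<in> borel_measurable borel" and g: "\<And>y. 0 \<le> g y"
  shows "ennreal A * emeasure (wmeasure w) {x. ennreal A < kop g x}
    \<le> integral\<^sup>N (wmeasure w) (\<lambda>y. ennreal (g y))"
proof -
  have "ennreal A * emeasure (wmeasure w) {x. ennreal A < kop g x}
      = integral\<^sup>N (wmeasure w) (\<lambda>x. ennreal A * indicator {x. ennreal A < kop g x} x)"
    by (simp add: nn_integral_cmult_indicator)
  also have "\<dots> \<le> integral\<^sup>N (wmeasure w) (kop g)"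
    by (intro nn_integral_mono) (auto simp: indicator_def less_imp_le)
  also have "\<dots> = integral\<^sup>N (wmeasure w) (\<lambda>y. ennreal (g y))" by (rule nn_integral_kop[OF assms])
  finally show ?thesis .
qed

lemma distf_Sop_le_emeasure_kop:
  assumes [measurable]: "\<phi> \<in> borel_measurable borel" and l: "0 < l"
  shows "distf w (Sop w \<Gamma> t \<phi>) l
    \<le> emeasure (wmeasure w) {x. ennreal (l/2) < kop (upper_part \<phi> (l/2)) x}"
  unfolding distf_def
proof (rule emeasure_mono)
  show "{x. l < \<bar>Sop w \<Gamma> t \<phi> x\<bar>} \<subseteq> {x. ennreal (l/2) < kop (upper_part \<phi> (l/2)) x}"
  proof (intro subsetI CollectI)
    fix x assume "x \<in> {x. l < \<bar>Sop w \<Gamma> t \<phi> x\<bar>}"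
    then have "ennreal (l/2) + ennreal (l/2) < ennreal \<bar>Sop w \<Gamma> t \<phi> x\<bar>"
      using l by (simp add: ennreal_plus[symmetric] ennreal_less_iff del: ennreal_plus)
    also have "\<dots> \<le> kop (\<lambda>y. \<bar>\<phi> y\<bar>) x" by (rule abs_Sop_le_kop)
    also have "\<dots> \<le> kop (upper_part \<phi> (l/2)) x + ennreal (l/2)" using l by (intro kop_abs_le) auto
    finally have sum_less: "ennreal (l/2) + ennreal (l/2) < kop (upper_part \<phi> (l/2)) x + ennreal (l/2)" .
    show "ennreal (l/2) < kop (upper_part \<phi> (l/2)) x"
    proof (rule ccontr)
      assume "\<not> ennreal (l/2) < kop (upper_part \<phi> (l/2)) x"
      then have "kop (upper_part \<phi> (l/2)) x + ennreal (l/2) \<le> ennreal (l/2) + ennreal (l/2)"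
        by (intro add_right_mono) (simp add: not_less)
      then show False using sum_less by simp
    qed
  qed
qed simp

lemma distf_Sop_le:
  assumes [measurable]: "\<phi> \<in> borel_measurable borel"
    and d: "\<And>l. 0 < l \<Longrightarrow> distf w \<phi> l \<le> ennreal ((m/l) powr q)"
    and q: "1 < q" and l: "0 < l"
  shows "distf w (Sop w \<Gamma> t \<phi>) l \<le> ennreal (dyadic_const q * (2*m/l) powr q)"
proof -
  let ?c = "dyadic_const q * (2*m/l) powr q"
  have "ennreal (l/2) * distf w (Sop w \<Gamma> t \<phi>) l
      \<le> ennreal (l/2) * emeasure (wmeasure w) {x. ennreal (l/2) < kop (upper_part \<phi> (l/2)) x}"
    using distf_Sop_le_emeasure_kop[OF assms(1) l] by (rule mult_left_mono) simp
  also have "\<dots> \<le> integral\<^sup>N (wmeasure w) (\<lambda>y. ennreal (upper_part \<phi> (l/2) y))"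
    by (rule emeasure_kop_level_le) auto
  also have "\<dots> \<le> ennreal (l/2 * (m/(l/2)) powr q * dyadic_const q)"
    using l by (intro nn_integral_upper_part_le[OF weight_measurable assms(1) d q]) auto
  also have "\<dots> = ennreal (l/2) * ennreal ?c"
    using l dyadic_const_ge_one[OF q] by (simp add: ennreal_mult[symmetric] mult_ac)
  finally show ?thesis using l by (subst (asm) ennreal_mult_le_mult_iff) auto
qed

lemma distf_Sop_eq_0:
  assumes [measurable]: "\<phi> \<in> borel_measurable borel"
    and d: "\<And>l. 0 < l \<Longrightarrow> distf w \<phi> l \<le> ennreal ((m/l) powr q)"
    and q: "1 < q" and l: "0 < l" and small: "K * dyadic_const q * (2*m/l) powr q \<le> 1"
  shows "distf w (Sop w \<Gamma> t \<phi>) l = 0"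
proof -
  have "kop (upper_part \<phi> (l/2)) x \<le> ennreal (l/2)" for x
  proof -
    have "kop (upper_part \<phi> (l/2)) x
        \<le> ennreal K * integral\<^sup>N (wmeasure w) (\<lambda>y. ennreal (upper_part \<phi> (l/2) y))"
      by (rule kop_le) auto
    also have "\<dots> \<le> ennreal K * ennreal (l/2 * (m/(l/2)) powr q * dyadic_const q)"
      using l by (intro mult_left_mono nn_integral_upper_part_le[OF weight_measurable assms(1) d q]) auto
    also have "\<dots> = ennreal (l/2 * (K * dyadic_const q * (2*m/l) powr q))"
      using l kernel_bound_nonneg dyadic_const_ge_one[OF q] by (simp add: ennreal_mult[symmetric] mult_ac)
    also have "\<dots> \<le> ennreal (l/2)"
      using small l kernel_bound_nonneg dyadic_const_ge_one[OF q]
      by (intro ennreal_leI mult_left_le) auto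
    finally show ?thesis .
  qed
  then have "{x. ennreal (l/2) < kop (upper_part \<phi> (l/2)) x} = {}" by (auto simp: not_less)
  then show ?thesis using distf_Sop_le_emeasure_kop[OF assms(1) l] by simp
qed

lemma wlnorm_Sop_le_finite:
  assumes [measurable]: "\<phi> \<in> borel_measurable borel" and wl: "wlnorm w (ereal q) \<phi> \<le> ennreal m"
    and m: "0 \<le> m" and q: "1 < q" and qr: "q \<le> r" and K: "0 < K"
  shows "wlnorm w (ereal r) (Sop w \<Gamma> t \<phi>)
    \<le> ennreal (2 * dyadic_const q powr (1/q) * K powr (1/q - 1/r) * m)"
proof (rule wlnorm_le_if_distf_le)
  let ?D = "dyadic_const q"
  have D: "0 < ?D" using dyadic_const_ge_one[OF q] by simp
  have d: "\<And>l. 0 < l \<Longrightarrow> distf w \<phi> l \<le> ennreal ((m/l) powr q)"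
    using distf_le_if_wlnorm_le[OF assms(1) wl] q m by auto
  show "0 < r" using q qr by simp
  show "0 \<le> 2 * ?D powr (1/q) * K powr (1/q - 1/r) * m" using m by simp
  fix l :: real assume l: "0 < l"
  show "distf w (Sop w \<Gamma> t \<phi>) l \<le> ennreal ((2 * ?D powr (1/q) * K powr (1/q - 1/r) * m / l) powr r)"
  proof (cases "K * ?D * (2*m/l) powr q \<le> 1")
    case True
    then show ?thesis using distf_Sop_eq_0[OF assms(1) d q l] by simp
  next
    case False
    have "?D * (2*m/l) powr q \<le> (?D powr (1/q) * K powr (1/q - 1/r) * (2*m/l)) powr r"
      using False m l by (intro powr_interpolation_le[OF D K _ q qr]) auto
    also have "?D powr (1/q) * K powr (1/q - 1/r) * (2*m/l) = 2 * ?D powr (1/q) * K powr (1/q - 1/r) * m / l"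
      by simp
    finally show ?thesis
      using distf_Sop_le[OF assms(1) d q l] by (meson ennreal_leI order.trans)
  qed
qed

lemma wlnorm_infinity_Sop_le:
  assumes [measurable]: "\<phi> \<in> borel_measurable borel" and wl: "wlnorm w (ereal q) \<phi> \<le> ennreal m"
    and m: "0 \<le> m" and q: "1 < q" and K: "0 < K"
  shows "wlnorm w \<infinity> (Sop w \<Gamma> t \<phi>) \<le> ennreal (2 * dyadic_const q powr (1/q) * K powr (1/q) * m)"
proof (rule wlnorm_infinity_le_if_distf_eq_0)
  have D: "0 < dyadic_const q" using dyadic_const_ge_one[OF q] by simp
  have d: "\<And>l. 0 < l \<Longrightarrow> distf w \<phi> l \<le> ennreal ((m/l) powr q)"
    using distf_le_if_wlnorm_le[OF assms(1) wl] q m by auto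
  show B: "0 \<le> 2 * dyadic_const q powr (1/q) * K powr (1/q) * m" using m by simp
  fix l assume large: "2 * dyadic_const q powr (1/q) * K powr (1/q) * m < l"
  then have l: "0 < l" using B by linarith
  show "distf w (Sop w \<Gamma> t \<phi>) l = 0"
    using large by (intro distf_Sop_eq_0[OF assms(1) d q l] mult_powr_le_one_if_large[OF D K m q l]) auto
qed

lemma abs_Sop_le_if_wlnorm_infinity_le:
  assumes [measurable]: "\<phi> \<in> borel_measurable borel" and wl: "wlnorm w \<infinity> \<phi> \<le> ennreal m"
    and m: "0 \<le> m"
  shows "\<bar>Sop w \<Gamma> t \<phi> x\<bar> \<le> m"
proof (rule field_le_epsilon)
  fix e :: real assume e: "0 < e"
  have "distf w \<phi> (m + e) = 0" using distf_eq_0_if_wlnorm_infinity_le[OF assms(1) wl m] e by simp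
  then have "integral\<^sup>N (wmeasure w) (\<lambda>y. ennreal (upper_part \<phi> (m + e) y))
      \<le> integral\<^sup>N (wmeasure w) (\<lambda>y. top * indicator {y. m + e < \<bar>\<phi> y\<bar>} y)"
    by (intro nn_integral_mono) (auto simp: upper_part_def indicator_def)
  also have "\<dots> = top * distf w \<phi> (m + e)"
    by (subst nn_integral_cmult_indicator) (auto simp: distf_def)
  finally have "kop (upper_part \<phi> (m + e)) x = 0"
    using kop_le[of "upper_part \<phi> (m + e)" x] \<open>distf w \<phi> (m + e) = 0\<close> by simp
  then have "ennreal \<bar>Sop w \<Gamma> t \<phi> x\<bar> \<le> ennreal (m + e)"
    using abs_Sop_le_kop kop_abs_le[of \<phi> "m + e" x] m e by (auto intro: order.trans)
  then show "\<bar>Sop w \<Gamma> t \<phi> x\<bar> \<le> m + e" using m e by (simp del: ennreal_plus)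
qed

lemma wlnorm_infinity_Sop_le_infinity:
  assumes "\<phi> \<in> borel_measurable borel" "wlnorm w \<infinity> \<phi> \<le> ennreal m" "0 \<le> m"
  shows "wlnorm w \<infinity> (Sop w \<Gamma> t \<phi>) \<le> ennreal m"
proof (rule wlnorm_infinity_le_if_distf_eq_0[OF \<open>0 \<le> m\<close>])
  fix l assume "m < l"
  then have "\<bar>Sop w \<Gamma> t \<phi> x\<bar> < l" for x
    using abs_Sop_le_if_wlnorm_infinity_le[OF assms] by (rule le_less_trans[rotated])
  then have "{x. l < \<bar>Sop w \<Gamma> t \<phi> x\<bar>} = {}" by (auto dest: less_asym)
  then show "distf w (Sop w \<Gamma> t \<phi>) l = 0" by (simp add: distf_def)
qed

lemma wlnorm_Sop_le_real_exponent:
  assumes \<phi>: "\<phi> \<in> borel_measurable borel" and wl: "wlnorm w (ereal q) \<phi> \<le> ennreal m"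
    and m: "0 \<le> m" and q: "1 < q" and qr: "ereal q \<le> r" and K: "0 < K"
  shows "wlnorm w r (Sop w \<Gamma> t \<phi>) \<le> ennreal (2 * dyadic_const q powr (1/q) * K powr (1/q - einv r) * m)"
proof (cases r)
  case PInf
  then show ?thesis using wlnorm_infinity_Sop_le[OF \<phi> wl m q K] by (simp add: einv_def)
next
  case (real r')
  then show ?thesis using wlnorm_Sop_le_finite[OF \<phi> wl m q _ K, of r'] qr by (simp add: einv_def)
qed (use qr in auto)

lemma wlnorm_Sop_le:
  assumes \<epsilon>: "0 < \<epsilon>" and q: "ereal (1 + \<epsilon>) < q" and qr: "q \<le> r"
    and \<phi>: "\<phi> \<in> borel_measurable borel" and fin: "wlnorm w q \<phi> < \<infinity>" and K: "0 < K"
  shows "wlnorm w r (Sop w \<Gamma> t \<phi>)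
    \<le> ennreal (2 * dyadic_const (1 + \<epsilon>) * K powr (einv q - einv r)) * wlnorm w q \<phi>"
proof -
  obtain m where m: "wlnorm w q \<phi> = ennreal m" "0 \<le> m"
    using fin by (cases "wlnorm w q \<phi>" rule: ennreal_cases) auto
  let ?D = "dyadic_const (1 + \<epsilon>)"
  have D: "1 \<le> ?D" using dyadic_const_ge_one \<epsilon> by simp
  have "wlnorm w r (Sop w \<Gamma> t \<phi>) \<le> ennreal (2 * ?D * K powr (einv q - einv r) * m)"
  proof (cases q)
    case PInf
    with qr have r: "r = \<infinity>" by simp
    have "wlnorm w r (Sop w \<Gamma> t \<phi>) \<le> ennreal m"
      using wlnorm_infinity_Sop_le_infinity[OF \<phi> _ m(2)] m(1) PInf r by simp
    also have "\<dots> \<le> ennreal (2 * ?D * K powr (einv q - einv r) * m)"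
      using PInf r D K m(2) by (intro ennreal_leI) (simp add: einv_def mult_le_cancel_right1)
    finally show ?thesis .
  next
    case (real q')
    then have q': "1 + \<epsilon> < q'" using q by simp
    have "wlnorm w r (Sop w \<Gamma> t \<phi>) \<le> ennreal (2 * dyadic_const q' powr (1/q') * K powr (1/q' - einv r) * m)"
      using wlnorm_Sop_le_real_exponent[OF \<phi> _ m(2) _ qr[unfolded real] K] m(1) real q' \<epsilon> by simp
    also have "\<dots> \<le> ennreal (2 * ?D * K powr (1/q' - einv r) * m)"
      using dyadic_const_powr_le[of "1 + \<epsilon>" q'] q' \<epsilon> m(2)
      by (intro ennreal_leI mult_right_mono mult_left_mono) auto
    finally show ?thesis using real by (simp add: einv_def)
  qed (use q in auto)
  then show ?thesis using m K D by (simp add: ennreal_mult)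
qed

end

lemma kernel_ok_weak_type:
  fixes w :: "real^'n::finite \<Rightarrow> real"
  assumes cs: "0 < cs" and Cs: "0 < Cs" and c0: "0 < c0"
    and vol: "\<And>x \<rho>. 0 < \<rho> \<Longrightarrow> c0 * \<rho> powr \<beta> \<le> wvol w (ball x \<rho>)"
    and wnn: "\<And>x. 0 \<le> w x" and wm: "w \<in> borel_measurable borel" and \<epsilon>: "0 < \<epsilon>"
  shows "\<exists>c2>0. \<forall>\<Gamma>. kernel_ok w cs Cs \<Gamma> \<longrightarrow>
           (\<forall>(q::ereal) (r::ereal) (\<phi>::real^'n \<Rightarrow> real) (t::real).
              ereal (1 + \<epsilon>) < q \<longrightarrow> q \<le> r \<longrightarrow>
              \<phi> \<in> borel_measurable borel \<longrightarrow> wlnorm w q \<phi> < \<infinity> \<longrightarrow> 0 < t \<longrightarrow>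
              wlnorm w r (Sop w \<Gamma> t \<phi>)
                \<le> ennreal (c2 * t powr (- (\<beta> / 2) * (einv q - einv r))) * wlnorm w q \<phi>)"
proof (intro exI[of _ "2 * dyadic_const (1 + \<epsilon>) * max 1 (Cs / c0)"] conjI allI impI)
  let ?D = "dyadic_const (1 + \<epsilon>)"
  have D: "1 \<le> ?D" using dyadic_const_ge_one[of "1 + \<epsilon>"] \<epsilon> by simp
  then show "0 < 2 * ?D * max 1 (Cs / c0)" by simp
  fix \<Gamma> q r and \<phi> :: "real^'n \<Rightarrow> real" and t :: real
  assume K: "kernel_ok w cs Cs \<Gamma>" and q: "ereal (1 + \<epsilon>) < q" and qr: "q \<le> r"
    and \<phi>: "\<phi> \<in> borel_measurable borel" and fin: "wlnorm w q \<phi> < \<infinity>" and t: "0 < t"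
  let ?K = "Cs / c0 * t powr (- (\<beta> / 2))" and ?e = "einv q - einv r"
  interpret doubly_stochastic_kernel w \<Gamma> t ?K
    by (rule kernel_ok_imp_doubly_stochastic_kernel[OF K cs Cs t c0 vol wnn wm])
  have "1 \<le> q" using \<epsilon> q
    by (metis ereal_less_eq(3) less_add_same_cancel1 less_eq_real_def less_imp_le one_ereal_def order.trans)
  then have "?K powr ?e \<le> max 1 (Cs / c0) * t powr (- (\<beta> / 2) * ?e)"
    using Cs c0 t einv_diff_bounds[OF _ qr] by (intro powr_mult_powr_le_max) auto
  then have bound: "2 * ?D * ?K powr ?e \<le> 2 * ?D * max 1 (Cs / c0) * t powr (- (\<beta> / 2) * ?e)"
    using D by (simp add: mult_left_mono)
  have "wlnorm w r (Sop w \<Gamma> t \<phi>) \<le> ennreal (2 * ?D * ?K powr ?e) * wlnorm w q \<phi>"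
    using Cs c0 t by (intro wlnorm_Sop_le[OF \<epsilon> q qr \<phi> fin]) simp
  also have "\<dots> \<le> ennreal (2 * ?D * max 1 (Cs / c0) * t powr (- (\<beta> / 2) * ?e)) * wlnorm w q \<phi>"
    using bound by (intro mult_right_mono ennreal_leI) auto
  finally show "wlnorm w r (Sop w \<Gamma> t \<phi>)
      \<le> ennreal (2 * ?D * max 1 (Cs / c0) * t powr (- (\<beta> / 2) * ?e)) * wlnorm w q \<phi>" .
qed

theorem lemma2p5:
  fixes w :: "real^'n::finite \<Rightarrow> real" and \<alpha> cs Cs :: real
  assumes weight: "(\<exists>i a. 0 \<le> a \<and> a < 1 \<and> w = wA i a \<and> \<alpha> = a) \<or>
                   (\<exists>b. 0 \<le> b \<and> b < real CARD('n) \<and> w = wB b \<and> \<alpha> = b)"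
    and cs_pos: "0 < cs" and Cs_pos: "0 < Cs"
  shows "\<forall>\<epsilon>>0. \<exists>c2>0. \<forall>\<Gamma>. kernel_ok w cs Cs \<Gamma> \<longrightarrow>
           (\<forall>(q::ereal) (r::ereal) (\<phi>::real^'n \<Rightarrow> real) (t::real).
              ereal (1 + \<epsilon>) < q \<longrightarrow> q \<le> r \<longrightarrow>
              \<phi> \<in> borel_measurable borel \<longrightarrow> wlnorm w q \<phi> < \<infinity> \<longrightarrow> 0 < t \<longrightarrow>
              wlnorm w r (Sop w \<Gamma> t \<phi>)
                \<le> ennreal (c2 * t powr (- ((real CARD('n) + \<alpha>) / 2) * (einv q - einv r)))
                   * wlnorm w q \<phi>)"
proof -
  obtain g where gauge: "lipschitz_gauge g" and \<alpha>: "0 \<le> \<alpha>" and w: "w = (\<lambda>y. rpow (g y) \<alpha>)"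
    using weight_cases[OF weight] .
  obtain c0 where c0: "0 < c0"
    and vol: "\<And>x \<rho>. 0 < \<rho> \<Longrightarrow> c0 * \<rho> powr (real CARD('n) + \<alpha>) \<le> wvol w (ball x \<rho>)"
    using lipschitz_gauge.wvol_ball_growth[OF gauge \<alpha>] unfolding w by blast
  have wnn: "\<And>x. 0 \<le> w x" and wm: "w \<in> borel_measurable borel"
    using lipschitz_gauge.nonneg[OF gauge] lipschitz_gauge.measurable_gauge[OF gauge]
    by (auto simp: w rpow_nonneg)
  show ?thesis using kernel_ok_weak_type[OF cs_pos Cs_pos c0 vol wnn wm] by blast
qed

end
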